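(* Let $X$ be a topological space and $k$ a complete non-Archimedean valued field. For every $x\in \mathrm{BSC}_k(X)$ the support $\mathrm{supp}(x)=\{f\in C_{bd}(X,k): |f|_x=0\}$ is a maximal ideal of $C_{bd}(X,k)$, and the map $$\mathscr F_{\mathrm{supp}}:\mathrm{BSC}_k(X)\to \mathrm{UF}(X),\qquad x\mapsto \mathscr F_{\mathrm{supp}(x)}=\{U\in \mathrm{CO}(X): 1_U\notin \mathrm{supp}(x)\}$$ is a homeomorphism.
   Context: Topological spaces are not assumed Hausdorff. $k$ is a field complete with respect to a non-Archimedean absolute value $|\cdot|$ of rank one (possibly trivial). $C_{bd}(X,k)$ is the commutative $k$-algebra of bounded continuous functions $X\to k$ with the supremum norm $\|f\|=\sup_{x\in X}|f(x)|$; for $U\subset X$ clopen, $1_U$ is its characteristic function. $\mathrm{CO}(X)$ denotes the set of clopen (closed and open) subsets of $X$. An ultrafiltre of $\mathrm{CO}(X)$ is a subset $\mathscr F\subset \mathrm{CO}(X)$ with: $\emptyset\notin\mathscr F$; $U\cap V\in\mathscr F$ for $U,V\in\mathscr F$; $U\cup V\in\mathscr F$ for $U\in \mathrm{CO}(X)$, $V\in\mathscr F$; and for every $U\in\mathrm{CO}(X)$, $U\in\mathscr F$ or $X\setminus U\in\mathscr F$. $\mathrm{UF}(X)$ is the set of such ultrafiltres with the topology having as basis the sets $\{\mathscr F\in\mathrm{UF}(X): U\in\mathscr F\}$, $U\in\mathrm{CO}(X)$. $\mathrm{BSC}_k(X)$ is the Berkovich spectrum $\mathcal M_k(C_{bd}(X,k))$: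 the set of multiplicative seminorms $f\mapsto |f|_x$ on $C_{bd}(X,k)$ (so $|fg|_x=|f|_x|g|_x$, $|1|_x=1$, $|f+g|_x\le\max(|f|_x,|g|_x)$, $|af|_x=|a||f|_x$ for $a\in k$) that are bounded ($|f|_x\le\|f\|$), with the weakest topology making all maps $x\mapsto|f|_x$ continuous; it is compact Hausdorff. *)

theory Defs
  imports "HOL-Analysis.Analysis" "HOL-Algebra.Ideal"
begin

definition nonarch_complete_abs :: "('k::field \<Rightarrow> real) \<Rightarrow> bool" where
  "nonarch_complete_abs absv \<longleftrightarrow>
     (\<forall>a. absv a \<ge> 0) \<and>
     (\<forall>a. absv a = 0 \<longleftrightarrow> a = 0) \<and>
     (\<forall>a b. absv (a * b) = absv a * absv b) \<and>
     (\<forall>a b. absv (a + b) \<le> max (absv a) (absv b)) \<and>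
     (\<forall>s :: nat \<Rightarrow> 'k.
        (\<forall>e>0. \<exists>N. \<forall>m\<ge>N. \<forall>n\<ge>N. absv (s m - s n) < e) \<longrightarrow>
        (\<exists>l. \<forall>e>0. \<exists>N. \<forall>n\<ge>N. absv (s n - l) < e))"

text \<open>Functions are represented extensionally: they vanish outside the topspace.
  Continuity is w.r.t. the topology on k induced by absv.\<close>

definition cont_k :: "'a topology \<Rightarrow> ('k::field \<Rightarrow> real) \<Rightarrow> ('a \<Rightarrow> 'k) \<Rightarrow> bool" where
  "cont_k X absv f \<longleftrightarrow>
     (\<forall>x\<in>topspace X. \<forall>e>0. \<exists>U. openin X U \<and> x \<in> U \<and>
        (\<forall>y\<in>U. absv (f y - f x) < e))"

definition Cbd :: "'a topology \<Rightarrow> ('k::field \<Rightarrow> real) \<Rightarrow> ('a \<Rightarrow> 'k) set" where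
  "Cbd X absv = {f. cont_k X absv f \<and> (\<exists>B. \<forall>x\<in>topspace X. absv (f x) \<le> B)
                    \<and> (\<forall>x. x \<notin> topspace X \<longrightarrow> f x = 0)}"

definition supnorm :: "'a topology \<Rightarrow> ('k::field \<Rightarrow> real) \<Rightarrow> ('a \<Rightarrow> 'k) \<Rightarrow> real" where
  "supnorm X absv f = Sup (insert 0 ((\<lambda>x. absv (f x)) ` topspace X))"

definition one_k :: "'a topology \<Rightarrow> 'a \<Rightarrow> 'k::field" where
  "one_k X = (\<lambda>x. if x \<in> topspace X then 1 else 0)"

definition Cbd_ring :: "'a topology \<Rightarrow> ('k::field \<Rightarrow> real) \<Rightarrow> ('a \<Rightarrow> 'k) ring" where
  "Cbd_ring X absv = \<lparr> carrier = Cbd X absv,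
                        monoid.mult = (\<lambda>f g x. f x * g x),
                        one = one_k X,
                        zero = (\<lambda>x. 0),
                        add = (\<lambda>f g x. f x + g x) \<rparr>"

definition char_k :: "'a set \<Rightarrow> 'a \<Rightarrow> 'k::field" where
  "char_k U = (\<lambda>x. if x \<in> U then 1 else 0)"

definition BSC :: "'a topology \<Rightarrow> ('k::field \<Rightarrow> real) \<Rightarrow> (('a \<Rightarrow> 'k) \<Rightarrow> real) set" where
  "BSC X absv = {p. p \<in> extensional (Cbd X absv) \<and>
     (\<forall>f\<in>Cbd X absv. 0 \<le> p f) \<and>
     (\<forall>f\<in>Cbd X absv. \<forall>g\<in>Cbd X absv. p (\<lambda>x. f x * g x) = p f * p g) \<and>
     p (one_k X) = 1 \<and>
     (\<forall>f\<in>Cbd X absv. \<forall>g\<in>Cbd X absv. p (\<lambda>x. f x + g x) \<le> max (p f) (p g)) \<and>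
     (\<forall>a. \<forall>f\<in>Cbd X absv. p (\<lambda>x. a * f x) = absv a * p f) \<and>
     (\<forall>f\<in>Cbd X absv. p f \<le> supnorm X absv f)}"

text \<open>Weakest topology making all evaluations p \<mapsto> p f continuous.\<close>
definition BSC_top :: "'a topology \<Rightarrow> ('k::field \<Rightarrow> real) \<Rightarrow> (('a \<Rightarrow> 'k) \<Rightarrow> real) topology" where
  "BSC_top X absv = subtopology (product_topology (\<lambda>f. euclideanreal) (Cbd X absv)) (BSC X absv)"

definition supp :: "'a topology \<Rightarrow> ('k::field \<Rightarrow> real) \<Rightarrow> (('a \<Rightarrow> 'k) \<Rightarrow> real) \<Rightarrow> ('a \<Rightarrow> 'k) set" where
  "supp X absv p = {f\<in>Cbd X absv. p f = 0}"

definition CO :: "'a topology \<Rightarrow> 'a set set" where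
  "CO X = {U. closedin X U \<and> openin X U}"

definition UF :: "'a topology \<Rightarrow> 'a set set set" where
  "UF X = {F. F \<subseteq> CO X \<and> {} \<notin> F \<and>
     (\<forall>U\<in>F. \<forall>V\<in>F. U \<inter> V \<in> F) \<and>
     (\<forall>U\<in>CO X. \<forall>V\<in>F. U \<union> V \<in> F) \<and>
     (\<forall>U\<in>CO X. U \<in> F \<or> topspace X - U \<in> F)}"

text \<open>Topology with basis the sets {F \<in> UF X. U \<in> F}, U clopen.\<close>
definition UF_top :: "'a topology \<Rightarrow> 'a set set topology" where
  "UF_top X = topology (\<lambda>S. S \<subseteq> UF X \<and>
     (\<forall>F\<in>S. \<exists>U\<in>CO X. U \<in> F \<and> {G\<in>UF X. U \<in> G} \<subseteq> S))"

definition Fsupp :: "'a topology \<Rightarrow> ('k::field \<Rightarrow> real) \<Rightarrow> (('a \<Rightarrow> 'k) \<Rightarrow> real) \<Rightarrow> 'a set set" where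
  "Fsupp X absv p = {U\<in>CO X. (char_k U :: 'a \<Rightarrow> 'k) \<notin> supp X absv p}"

end

theory Submission
  imports Defs
begin

text \<open>
  For a bounded continuous \<open>f\<close> and \<open>r > 0\<close>, the non-Archimedean inequality makes
  the superlevel set \<open>{x. r \<le> |f x|}\<close> clopen, and \<open>f\<close> is invertible on it. Hence a
  point \<open>p\<close> of the spectrum takes only the values 0 and 1 on idempotents \<open>1\<^sub>U\<close>, the
  clopens with \<open>|1\<^sub>U|\<^sub>p = 1\<close> form an ultrafilter \<open>\<F>\<close>, and \<open>p\<close> is recovered from it as
  \<open>|f|\<^sub>p = inf\<^sub>U\<^sub>\<in>\<^sub>\<F> sup\<^sub>U |f|\<close>: the superlevel and sublevel sets of \<open>f\<close> at every level
  decide on which side of that level \<open>|f|\<^sub>p\<close> lies. Conversely this formula turns every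
  ultrafilter of clopens into a point of the spectrum, and the same level-set arguments show
  that both maps are continuous.
\<close>

locale nonarch_abs =
  fixes absv :: "'k::field \<Rightarrow> real"
  assumes nonarch_complete_abs: "nonarch_complete_abs absv"
begin

lemma absv_properties:
  "(\<forall>a. 0 \<le> absv a) \<and> (\<forall>a. absv a = 0 \<longleftrightarrow> a = 0) \<and> (\<forall>a b. absv (a * b) = absv a * absv b)
    \<and> (\<forall>a b. absv (a + b) \<le> max (absv a) (absv b))"
  using nonarch_complete_abs unfolding nonarch_complete_abs_def by (elim conjE) (intro conjI)

lemma absv_nonneg [simp]: "0 \<le> absv a"
  using absv_properties by blast

lemma absv_eq_0_iff [simp]: "absv a = 0 \<longleftrightarrow> a = 0"
  using absv_properties by blast

lemma absv_mult [simp]: "absv (a * b) = absv a * absv b"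
  using absv_properties by blast

lemma absv_add_le_max: "absv (a + b) \<le> max (absv a) (absv b)"
  using absv_properties by blast

lemma absv_zero [simp]: "absv 0 = 0"
  by simp

lemma absv_one [simp]: "absv 1 = 1"
proof -
  have "absv 1 * absv 1 = absv 1 * 1" and "absv 1 \<noteq> 0"
    using absv_mult[of 1 1] by simp_all
  then show ?thesis
    using mult_left_cancel by blast
qed

lemma absv_minus [simp]: "absv (- a) = absv a"
proof -
  have "absv (-1) * absv (-1) = 1"
    using absv_mult[of "-1" "-1"] by simp
  then have "(absv (-1) - 1) * (absv (-1) + 1) = 0"
    by (simp add: algebra_simps)
  moreover have "absv (-1) + 1 \<noteq> 0"
    using absv_nonneg[of "-1"] by linarith
  ultimately have "absv (-1) = 1"
    by simp
  then show ?thesis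
    using absv_mult[of "-1" a] by simp
qed

lemma absv_minus_commute: "absv (a - b) = absv (b - a)"
  using absv_minus[of "a - b"] by simp

lemma absv_inverse [simp]: "absv (inverse a) = inverse (absv a)"
proof (cases "a = 0")
  case False
  then have "absv a * absv (inverse a) = 1"
    using absv_mult[of a "inverse a"] by simp
  then show ?thesis
    by (simp add: inverse_unique)
qed simp

lemma absv_diff_le_max: "absv (a - b) \<le> max (absv a) (absv b)"
  using absv_add_le_max[of a "- b"] by simp

lemma absv_eq_if_absv_diff_less: "absv (b - a) < absv a \<Longrightarrow> absv b = absv a"
  using absv_add_le_max[of a "b - a"] absv_diff_le_max[of b "b - a"] by auto

lemma absv_inverse_diff_le:
  assumes "0 < r" "r \<le> absv a" "r \<le> absv b"
  shows "absv (inverse a - inverse b) \<le> absv (a - b) / r\<^sup>2"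
proof -
  have "a \<noteq> 0" "b \<noteq> 0"
    using assms by auto
  then have "inverse a - inverse b = (b - a) * inverse a * inverse b"
    by (simp add: field_simps)
  then have "absv (inverse a - inverse b) = absv (a - b) * inverse (absv a) * inverse (absv b)"
    using absv_minus_commute[of b a] by simp
  also have "\<dots> \<le> absv (a - b) * inverse r * inverse r"
    using assms by (intro mult_mono le_imp_inverse_le) auto
  also have "\<dots> = absv (a - b) / r\<^sup>2"
    by (simp add: power2_eq_square field_simps)
  finally show ?thesis .
qed

lemma absv_mult_diff_le:
  "absv (a * b - c * d) \<le> max (absv a * absv (b - d)) (absv (a - c) * absv d)"
proof -
  have "a * b - c * d = a * (b - d) + (a - c) * d"
    by (simp add: algebra_simps)
  then show ?thesis
    using absv_add_le_max[of "a * (b - d)" "(a - c) * d"] by simp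
qed

end

lemma CO_subset_topspace: "U \<in> CO X \<Longrightarrow> U \<subseteq> topspace X"
  unfolding CO_def using closedin_subset by blast

lemma topspace_in_CO: "topspace X \<in> CO X"
  unfolding CO_def by auto

lemma empty_in_CO: "{} \<in> CO X"
  unfolding CO_def by auto

lemma CO_Diff: "U \<in> CO X \<Longrightarrow> topspace X - U \<in> CO X"
  unfolding CO_def by (auto simp: closedin_def)

lemma CO_Int: "U \<in> CO X \<Longrightarrow> V \<in> CO X \<Longrightarrow> U \<inter> V \<in> CO X"
  unfolding CO_def by auto

lemma CO_Un: "U \<in> CO X \<Longrightarrow> V \<in> CO X \<Longrightarrow> U \<union> V \<in> CO X"
  unfolding CO_def by auto

lemma char_k_add_char_k_Diff:
  "U \<subseteq> topspace X \<Longrightarrow> (\<lambda>x. (char_k U x :: 'k::field) + char_k (topspace X - U) x) = one_k X"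
  by (auto simp: char_k_def one_k_def fun_eq_iff)

lemma UFI:
  assumes "F \<subseteq> CO X" "{} \<notin> F" "\<And>U V. U \<in> F \<Longrightarrow> V \<in> F \<Longrightarrow> U \<inter> V \<in> F"
    "\<And>U V. U \<in> CO X \<Longrightarrow> V \<in> F \<Longrightarrow> U \<union> V \<in> F"
    "\<And>U. U \<in> CO X \<Longrightarrow> U \<in> F \<or> topspace X - U \<in> F"
  shows "F \<in> UF X"
  unfolding UF_def using assms by blast

context
  fixes X :: "'a topology" and F assumes F: "F \<in> UF X"
begin

lemma UF_CO: "U \<in> F \<Longrightarrow> U \<in> CO X"
  using F unfolding UF_def by blast

lemma UF_nonempty: "U \<in> F \<Longrightarrow> U \<noteq> {}"
  using F unfolding UF_def by blast

lemma UF_Int: "U \<in> F \<Longrightarrow> V \<in> F \<Longrightarrow> U \<inter> V \<in> F"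
  using F unfolding UF_def by blast

lemma UF_Diff_cases: "U \<in> CO X \<Longrightarrow> U \<in> F \<or> topspace X - U \<in> F"
  using F unfolding UF_def by blast

lemma UF_mono:
  assumes "V \<in> F" "U \<in> CO X" "V \<subseteq> U"
  shows "U \<in> F"
proof -
  have "U \<union> V \<in> F"
    using F assms(1,2) unfolding UF_def by blast
  then show ?thesis
    using assms(3) by (simp add: sup.absorb1)
qed

lemma UF_Int_iff: "U \<in> CO X \<Longrightarrow> V \<in> CO X \<Longrightarrow> U \<inter> V \<in> F \<longleftrightarrow> U \<in> F \<and> V \<in> F"
  using UF_mono UF_Int by blast

lemma topspace_in_UF: "topspace X \<in> F"
  using UF_Diff_cases[OF empty_in_CO] UF_nonempty by auto

lemma UF_subset_topspace: "U \<in> F \<Longrightarrow> U \<subseteq> topspace X"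
  using UF_CO CO_subset_topspace by blast

end

lemma openin_UF_top:
  "openin (UF_top X) S \<longleftrightarrow>
     S \<subseteq> UF X \<and> (\<forall>F\<in>S. \<exists>U\<in>CO X. U \<in> F \<and> {G\<in>UF X. U \<in> G} \<subseteq> S)"
proof -
  define isopen where "isopen S \<longleftrightarrow> S \<subseteq> UF X \<and> (\<forall>F\<in>S. \<exists>U\<in>CO X. U \<in> F \<and> {G\<in>UF X. U \<in> G} \<subseteq> S)"
    for S
  have "istopology isopen"
    unfolding istopology_def
  proof (intro conjI allI impI)
    fix S S' assume S: "isopen S" and S': "isopen S'"
    have "\<exists>W\<in>CO X. W \<in> F \<and> {G\<in>UF X. W \<in> G} \<subseteq> S \<inter> S'" if F: "F \<in> S \<inter> S'" for F
    proof -
      obtain U where U: "U \<in> CO X" "U \<in> F" "{G\<in>UF X. U \<in> G} \<subseteq> S"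
        using S F unfolding isopen_def by blast
      obtain V where V: "V \<in> CO X" "V \<in> F" "{G\<in>UF X. V \<in> G} \<subseteq> S'"
        using S' F unfolding isopen_def by blast
      have "F \<in> UF X"
        using S F unfolding isopen_def by blast
      then have "U \<inter> V \<in> F"
        using U(2) V(2) UF_Int by blast
      moreover have "{G\<in>UF X. U \<inter> V \<in> G} \<subseteq> S \<inter> S'"
        using UF_Int_iff[OF _ U(1) V(1)] U(3) V(3) by blast
      ultimately show ?thesis
        using CO_Int[OF U(1) V(1)] by blast
    qed
    then show "isopen (S \<inter> S')"
      using S unfolding isopen_def by blast
  next
    fix K assume K: "\<forall>S\<in>K. isopen S"
    have "\<exists>U\<in>CO X. U \<in> F \<and> {G\<in>UF X. U \<in> G} \<subseteq> \<Union>K" if F: "F \<in> \<Union>K" for F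
    proof -
      obtain S where S: "S \<in> K" "F \<in> S"
        using F by blast
      then obtain U where "U \<in> CO X" "U \<in> F" "{G\<in>UF X. U \<in> G} \<subseteq> S"
        using K unfolding isopen_def by blast
      then show ?thesis
        using S(1) by blast
    qed
    moreover have "\<Union>K \<subseteq> UF X"
      using K unfolding isopen_def by blast
    ultimately show "isopen (\<Union>K)"
      unfolding isopen_def by blast
  qed
  moreover have "UF_top X = topology isopen"
    unfolding UF_top_def isopen_def ..
  ultimately have "openin (UF_top X) = isopen"
    by simp
  then show ?thesis
    by (simp add: isopen_def)
qed

lemma topspace_UF_top: "topspace (UF_top X) = UF X"
proof -
  have "openin (UF_top X) (UF X)"
    unfolding openin_UF_top using topspace_in_CO topspace_in_UF by blast
  then have "UF X \<subseteq> topspace (UF_top X)"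
    by (rule openin_subset)
  moreover have "topspace (UF_top X) \<subseteq> UF X"
    using openin_topspace[of "UF_top X"] unfolding openin_UF_top by (elim conjE)
  ultimately show ?thesis
    by (rule antisym[rotated])
qed

lemma continuous_map_into_UF_top:
  assumes maps: "\<And>y. y \<in> topspace Y \<Longrightarrow> f y \<in> UF X"
    and basic: "\<And>U. U \<in> CO X \<Longrightarrow> openin Y {y \<in> topspace Y. U \<in> f y}"
  shows "continuous_map Y (UF_top X) f"
  unfolding continuous_map
proof (intro conjI allI impI)
  show "f ` topspace Y \<subseteq> topspace (UF_top X)"
    using maps unfolding topspace_UF_top by blast
  fix S assume "openin (UF_top X) S"
  then have S: "\<forall>F\<in>S. \<exists>U\<in>CO X. U \<in> F \<and> {G\<in>UF X. U \<in> G} \<subseteq> S"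
    unfolding openin_UF_top by (elim conjE)
  show "openin Y {y \<in> topspace Y. f y \<in> S}"
  proof (subst openin_subopen, intro ballI)
    fix y assume y: "y \<in> {y \<in> topspace Y. f y \<in> S}"
    then obtain U where U: "U \<in> CO X" "U \<in> f y" "{G\<in>UF X. U \<in> G} \<subseteq> S"
      using S by blast
    have "{y \<in> topspace Y. U \<in> f y} \<subseteq> {y \<in> topspace Y. f y \<in> S}"
      using U(3) maps by blast
    then show "\<exists>V. openin Y V \<and> y \<in> V \<and> V \<subseteq> {y \<in> topspace Y. f y \<in> S}"
      using basic[OF U(1)] y U(2) by blast
  qed
qed

lemma openin_UF_topI:
  assumes "S \<subseteq> UF X" "\<And>F. F \<in> S \<Longrightarrow> \<exists>U\<in>CO X. U \<in> F \<and> (\<forall>G\<in>UF X. U \<in> G \<longrightarrow> G \<in> S)"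
  shows "openin (UF_top X) S"
  unfolding openin_UF_top using assms by blast

lemma le_mult_if_le_mult_above:
  fixes a b c :: real
  assumes "\<And>s t. a < s \<Longrightarrow> b < t \<Longrightarrow> c \<le> s * t"
  shows "c \<le> a * b"
proof -
  have "((\<lambda>t. (a + t) * (b + t)) \<longlongrightarrow> a * b) (at_right 0)"
    by (auto intro!: tendsto_eq_intros)
  moreover have "\<forall>\<^sub>F t in at_right 0. c \<le> (a + t) * (b + t)"
    using eventually_at_right_less[of 0] by eventually_elim (auto intro!: assms)
  ultimately show ?thesis
    by (rule tendsto_lowerbound) simp
qed

lemma mult_le_if_mult_below_le:
  fixes a b c :: real
  assumes "0 \<le> a" "0 \<le> b" "0 \<le> c"
    and below: "\<And>s t. 0 < s \<Longrightarrow> s < a \<Longrightarrow> 0 < t \<Longrightarrow> t < b \<Longrightarrow> s * t \<le> c"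
  shows "a * b \<le> c"
proof (cases "a = 0 \<or> b = 0")
  case False
  then have "0 < min a b"
    using assms by auto
  have lim: "((\<lambda>t. (a - t) * (b - t)) \<longlongrightarrow> a * b) (at_right 0)"
    by (auto intro!: tendsto_eq_intros)
  from \<open>0 < min a b\<close> have "\<forall>\<^sub>F t in at_right 0. t < min a b"
    unfolding eventually_at_right_field by blast
  then have "\<forall>\<^sub>F t in at_right 0. (a - t) * (b - t) \<le> c"
    using eventually_at_right_less[of 0] by eventually_elim (auto intro!: below)
  with lim show ?thesis
    by (rule tendsto_upperbound) simp
qed (use assms in auto)

locale nonarch_space = nonarch_abs absv for absv :: "'k::field \<Rightarrow> real" +
  fixes X :: "'a topology"
begin

lemma CbdD:
  assumes "f \<in> Cbd X absv"
  shows "cont_k X absv f" "\<exists>B>0. \<forall>x\<in>topspace X. absv (f x) \<le> B"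
    "\<And>x. x \<notin> topspace X \<Longrightarrow> f x = 0"
proof -
  obtain B where "\<forall>x\<in>topspace X. absv (f x) \<le> B"
    using assms unfolding Cbd_def by blast
  then show "\<exists>B>0. \<forall>x\<in>topspace X. absv (f x) \<le> B"
    by (intro exI[of _ "max B 1"]) (auto simp: le_max_iff_disj)
qed (use assms in \<open>auto simp: Cbd_def\<close>)

lemma CbdI:
  assumes "cont_k X absv f" "\<And>x. x \<in> topspace X \<Longrightarrow> absv (f x) \<le> B"
    "\<And>x. x \<notin> topspace X \<Longrightarrow> f x = 0"
  shows "f \<in> Cbd X absv"
  unfolding Cbd_def using assms by (intro CollectI conjI exI[of _ B] ballI allI impI)

lemma Cbd_contE:
  assumes "f \<in> Cbd X absv" "x \<in> topspace X" "e > 0"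
  obtains U where "openin X U" "x \<in> U" "\<And>y. y \<in> U \<Longrightarrow> absv (f y - f x) < e"
proof -
  have "\<forall>x\<in>topspace X. \<forall>e>0. \<exists>U. openin X U \<and> x \<in> U \<and> (\<forall>y\<in>U. absv (f y - f x) < e)"
    using CbdD(1)[OF assms(1)] unfolding cont_k_def .
  then show ?thesis
    using assms(2,3) that by meson
qed

lemma cont_k_locally_constant:
  assumes "\<And>x. x \<in> topspace X \<Longrightarrow> \<exists>U. openin X U \<and> x \<in> U \<and> (\<forall>y\<in>U. f y = f x)"
  shows "cont_k X absv f"
  unfolding cont_k_def
proof (intro ballI allI impI)
  fix x and e :: real assume x: "x \<in> topspace X" and e: "0 < e"
  obtain U where U: "openin X U" "x \<in> U" "\<forall>y\<in>U. f y = f x"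
    using assms[OF x] by blast
  have "absv (f y - f x) < e" if "y \<in> U" for y
    using U(3) that e by simp
  then show "\<exists>U. openin X U \<and> x \<in> U \<and> (\<forall>y\<in>U. absv (f y - f x) < e)"
    using U(1,2) by blast
qed

lemma Cbd_mult:
  assumes f: "f \<in> Cbd X absv" and g: "g \<in> Cbd X absv"
  shows "(\<lambda>x. f x * g x) \<in> Cbd X absv"
proof -
  obtain Bf Bg where "0 < Bf" "\<forall>x\<in>topspace X. absv (f x) \<le> Bf"
    and "0 < Bg" "\<forall>x\<in>topspace X. absv (g x) \<le> Bg"
    using CbdD(2)[OF f] CbdD(2)[OF g] by blast
  then obtain B where B: "0 < B" "\<And>x. x \<in> topspace X \<Longrightarrow> absv (f x) \<le> B \<and> absv (g x) \<le> B"
    by (intro that[of "max Bf Bg"]) (auto simp: le_max_iff_disj)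
  have "cont_k X absv (\<lambda>x. f x * g x)"
    unfolding cont_k_def
  proof (intro ballI allI impI)
    fix x e assume x: "x \<in> topspace X" and e: "(e::real) > 0"
    then have "e / B > 0"
      using B(1) by simp
    obtain U where U: "openin X U" "x \<in> U" "\<And>y. y \<in> U \<Longrightarrow> absv (f y - f x) < e / B"
      using Cbd_contE[OF f x \<open>e / B > 0\<close>] by blast
    obtain V where V: "openin X V" "x \<in> V" "\<And>y. y \<in> V \<Longrightarrow> absv (g y - g x) < e / B"
      using Cbd_contE[OF g x \<open>e / B > 0\<close>] by blast
    have "absv (f y * g y - f x * g x) < e" if y: "y \<in> U \<inter> V" for y
    proof -
      have "y \<in> topspace X"
        using y openin_subset[OF U(1)] by blast
      then have "absv (f y) \<le> B" "absv (g x) \<le> B"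
        using B(2) x by blast+
      then have "absv (f y) * absv (g y - g x) \<le> B * absv (g y - g x)"
          and "absv (f y - f x) * absv (g x) \<le> absv (f y - f x) * B"
        by (simp_all add: mult_right_mono mult_left_mono)
      moreover have "absv (g y - g x) * B < e" and "absv (f y - f x) * B < e"
        using U(3)[of y] V(3)[of y] y B(1) by (simp_all add: pos_less_divide_eq)
      ultimately show ?thesis
        using absv_mult_diff_le[of "f y" "g y" "f x" "g x"] by (simp add: mult.commute)
    qed
    then show "\<exists>W. openin X W \<and> x \<in> W \<and> (\<forall>y\<in>W. absv (f y * g y - f x * g x) < e)"
      using U V by (intro exI[of _ "U \<inter> V"]) auto
  qed
  moreover have "absv (f x * g x) \<le> B * B" if "x \<in> topspace X" for x
    using B(2)[OF that] B(1) by (simp add: mult_mono)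
  moreover have "f x * g x = 0" if "x \<notin> topspace X" for x
    using CbdD(3)[OF f that] by simp
  ultimately show ?thesis
    by (rule CbdI)
qed

lemma Cbd_add:
  assumes f: "f \<in> Cbd X absv" and g: "g \<in> Cbd X absv"
  shows "(\<lambda>x. f x + g x) \<in> Cbd X absv"
proof -
  obtain Bf Bg where "\<forall>x\<in>topspace X. absv (f x) \<le> Bf" "\<forall>x\<in>topspace X. absv (g x) \<le> Bg"
    using CbdD(2)[OF f] CbdD(2)[OF g] by blast
  then have bound: "absv (f x + g x) \<le> max Bf Bg" if "x \<in> topspace X" for x
    using absv_add_le_max[of "f x" "g x"] that by fastforce
  have "cont_k X absv (\<lambda>x. f x + g x)"
    unfolding cont_k_def
  proof (intro ballI allI impI)
    fix x e assume x: "x \<in> topspace X" and e: "(e::real) > 0"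
    obtain U where U: "openin X U" "x \<in> U" "\<And>y. y \<in> U \<Longrightarrow> absv (f y - f x) < e"
      using Cbd_contE[OF f x e] by blast
    obtain V where V: "openin X V" "x \<in> V" "\<And>y. y \<in> V \<Longrightarrow> absv (g y - g x) < e"
      using Cbd_contE[OF g x e] by blast
    have "absv (f y + g y - (f x + g x)) < e" if "y \<in> U \<inter> V" for y
    proof -
      have eq: "f y + g y - (f x + g x) = (f y - f x) + (g y - g x)"
        by simp
      have "absv (f y - f x) < e" "absv (g y - g x) < e"
        using U(3) V(3) that by auto
      then show ?thesis
        unfolding eq using absv_add_le_max[of "f y - f x" "g y - g x"] by simp
    qed
    then show "\<exists>W. openin X W \<and> x \<in> W \<and> (\<forall>y\<in>W. absv (f y + g y - (f x + g x)) < e)"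
      using U V by (intro exI[of _ "U \<inter> V"]) auto
  qed
  then show ?thesis
    using bound CbdD(3)[OF f] CbdD(3)[OF g] by (intro CbdI) auto
qed

lemma char_k_in_Cbd:
  assumes U: "U \<in> CO X"
  shows "(char_k U :: 'a \<Rightarrow> 'k) \<in> Cbd X absv"
proof (rule CbdI)
  have "openin X U" "openin X (topspace X - U)"
    using U unfolding CO_def by (auto simp: closedin_def)
  then show "cont_k X absv (char_k U :: 'a \<Rightarrow> 'k)"
    by (intro cont_k_locally_constant) (auto simp: char_k_def)
  show "\<And>x. absv (char_k U x :: 'k) \<le> 1"
    by (simp add: char_k_def)
  show "\<And>x. x \<notin> topspace X \<Longrightarrow> (char_k U x :: 'k) = 0"
    using CO_subset_topspace[OF U] by (auto simp: char_k_def)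
qed

lemma one_k_eq_char_k: "one_k X = char_k (topspace X)"
  unfolding one_k_def char_k_def ..

lemma one_k_in_Cbd: "one_k X \<in> Cbd X absv"
  unfolding one_k_eq_char_k using topspace_in_CO by (rule char_k_in_Cbd)

lemma const_in_Cbd: "(\<lambda>x. a * one_k X x) \<in> Cbd X absv"
proof (rule CbdI)
  show "cont_k X absv (\<lambda>x. a * one_k X x)"
    by (intro cont_k_locally_constant exI[of _ "topspace X"]) (auto simp: one_k_def)
  show "\<And>x. absv (a * one_k X x) \<le> absv a"
    by (simp add: one_k_def)
  show "\<And>x. x \<notin> topspace X \<Longrightarrow> a * one_k X x = 0"
    by (simp add: one_k_def)
qed

lemma scale_eq_const_mult:
  "f \<in> Cbd X absv \<Longrightarrow> (\<lambda>x. a * f x) = (\<lambda>x. (a * one_k X x) * f x)"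
  using CbdD(3) by (auto simp: one_k_def)

lemma scale_in_Cbd: "f \<in> Cbd X absv \<Longrightarrow> (\<lambda>x. a * f x) \<in> Cbd X absv"
  using scale_eq_const_mult Cbd_mult[OF const_in_Cbd] by simp

lemma zero_in_Cbd: "(\<lambda>x. 0) \<in> Cbd X absv"
  using scale_in_Cbd[OF one_k_in_Cbd, of 0] by simp

lemma uminus_in_Cbd: "f \<in> Cbd X absv \<Longrightarrow> (\<lambda>x. - f x) \<in> Cbd X absv"
  using scale_in_Cbd[of f "-1"] by simp

lemma one_k_mult: "f \<in> Cbd X absv \<Longrightarrow> (\<lambda>x. one_k X x * f x) = f"
  using CbdD(3) by (auto simp: one_k_def)

definition superlevel :: "('a \<Rightarrow> 'k) \<Rightarrow> real \<Rightarrow> 'a set" where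
  "superlevel f r = {x \<in> topspace X. r \<le> absv (f x)}"

lemma topspace_Diff_superlevel: "topspace X - superlevel f r = {x \<in> topspace X. absv (f x) < r}"
  unfolding superlevel_def by auto

lemma openin_superlevel:
  assumes f: "f \<in> Cbd X absv" and r: "0 < r"
  shows "openin X (superlevel f r)"
proof (subst openin_subopen, intro ballI)
  fix x assume x: "x \<in> superlevel f r"
  then have xX: "x \<in> topspace X" and rx: "r \<le> absv (f x)"
    unfolding superlevel_def by auto
  then obtain U where U: "openin X U" "x \<in> U" "\<And>y. y \<in> U \<Longrightarrow> absv (f y - f x) < absv (f x)"
    using Cbd_contE[OF f xX, of "absv (f x)"] r by auto
  have "U \<subseteq> superlevel f r"
  proof
    fix y assume y: "y \<in> U"
    then have "absv (f y) = absv (f x)"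
      by (rule absv_eq_if_absv_diff_less[OF U(3)])
    then show "y \<in> superlevel f r"
      using rx y openin_subset[OF U(1)] unfolding superlevel_def by auto
  qed
  then show "\<exists>V. openin X V \<and> x \<in> V \<and> V \<subseteq> superlevel f r"
    using U by blast
qed

lemma openin_topspace_Diff_superlevel:
  assumes f: "f \<in> Cbd X absv" and r: "0 < r"
  shows "openin X (topspace X - superlevel f r)"
proof (subst openin_subopen, intro ballI)
  fix x assume "x \<in> topspace X - superlevel f r"
  then have xX: "x \<in> topspace X" and rx: "absv (f x) < r"
    unfolding topspace_Diff_superlevel by auto
  obtain U where U: "openin X U" "x \<in> U" "\<And>y. y \<in> U \<Longrightarrow> absv (f y - f x) < r"
    using Cbd_contE[OF f xX r] by blast
  have "U \<subseteq> topspace X - superlevel f r"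
  proof
    fix y assume y: "y \<in> U"
    have "absv (f y) \<le> max (absv (f y - f x)) (absv (f x))"
      using absv_add_le_max[of "f y - f x" "f x"] by simp
    then have "absv (f y) < r"
      using U(3)[OF y] rx by simp
    then show "y \<in> topspace X - superlevel f r"
      using y openin_subset[OF U(1)] unfolding topspace_Diff_superlevel by auto
  qed
  then show "\<exists>V. openin X V \<and> x \<in> V \<and> V \<subseteq> topspace X - superlevel f r"
    using U by blast
qed

lemma superlevel_in_CO: "f \<in> Cbd X absv \<Longrightarrow> 0 < r \<Longrightarrow> superlevel f r \<in> CO X"
  using openin_superlevel openin_topspace_Diff_superlevel
  unfolding CO_def closedin_def superlevel_def by auto

definition partial_inverse :: "('a \<Rightarrow> 'k) \<Rightarrow> real \<Rightarrow> 'a \<Rightarrow> 'k" where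
  "partial_inverse f r = (\<lambda>x. if x \<in> superlevel f r then inverse (f x) else 0)"

lemma absv_partial_inverse_le: "0 < r \<Longrightarrow> absv (partial_inverse f r x) \<le> inverse r"
  unfolding partial_inverse_def superlevel_def by (auto intro: le_imp_inverse_le)

lemma mult_partial_inverse:
  assumes "0 < r"
  shows "(\<lambda>x. f x * partial_inverse f r x) = char_k (superlevel f r)"
proof
  fix x
  have "f x \<noteq> 0" if "x \<in> superlevel f r"
    using that assms unfolding superlevel_def by auto
  then show "f x * partial_inverse f r x = char_k (superlevel f r) x"
    unfolding partial_inverse_def char_k_def by simp
qed

lemma partial_inverse_in_Cbd:
  assumes f: "f \<in> Cbd X absv" and r: "0 < r"
  shows "partial_inverse f r \<in> Cbd X absv"
proof (rule CbdI)
  show "\<And>x. absv (partial_inverse f r x) \<le> inverse r"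
    using absv_partial_inverse_le[OF r] .
  show "\<And>x. x \<notin> topspace X \<Longrightarrow> partial_inverse f r x = 0"
    unfolding partial_inverse_def superlevel_def by auto
  have S: "superlevel f r \<in> CO X"
    using superlevel_in_CO[OF f r] .
  show "cont_k X absv (partial_inverse f r)"
    unfolding cont_k_def
  proof (intro ballI allI impI)
    fix x e assume x: "x \<in> topspace X" and e: "(e::real) > 0"
    show "\<exists>U. openin X U \<and> x \<in> U \<and> (\<forall>y\<in>U. absv (partial_inverse f r y - partial_inverse f r x) < e)"
    proof (cases "x \<in> superlevel f r")
      case False
      have "openin X (topspace X - superlevel f r)"
        using S unfolding CO_def closedin_def by blast
      then show ?thesis
        using False x e by (intro exI[of _ "topspace X - superlevel f r"]) (auto simp: partial_inverse_def)
    next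
      case True
      obtain U where U: "openin X U" "x \<in> U" "\<And>y. y \<in> U \<Longrightarrow> absv (f y - f x) < e * r\<^sup>2"
        using Cbd_contE[OF f x, of "e * r\<^sup>2"] e r by auto
      have "absv (partial_inverse f r y - partial_inverse f r x) < e"
        if y: "y \<in> U \<inter> superlevel f r" for y
      proof -
        have "absv (partial_inverse f r y - partial_inverse f r x) = absv (inverse (f y) - inverse (f x))"
          using y True by (simp add: partial_inverse_def)
        also have "\<dots> \<le> absv (f y - f x) / r\<^sup>2"
          using True y r by (intro absv_inverse_diff_le) (auto simp: superlevel_def)
        also have "\<dots> < e"
          using U(3) y r by (simp add: pos_divide_less_eq)
        finally show ?thesis .
      qed
      moreover have "openin X (U \<inter> superlevel f r)"
        using U(1) S unfolding CO_def by auto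
      ultimately show ?thesis
        using U(2) True by (intro exI[of _ "U \<inter> superlevel f r"]) auto
    qed
  qed
qed

definition sup_on :: "'a set \<Rightarrow> ('a \<Rightarrow> 'k) \<Rightarrow> real" where
  "sup_on U f = Sup (insert 0 ((\<lambda>x. absv (f x)) ` U))"

lemma supnorm_eq_sup_on: "supnorm X absv f = sup_on (topspace X) f"
  unfolding supnorm_def sup_on_def ..

lemma sup_on_le: "0 \<le> c \<Longrightarrow> (\<And>x. x \<in> U \<Longrightarrow> absv (f x) \<le> c) \<Longrightarrow> sup_on U f \<le> c"
  unfolding sup_on_def by (rule cSup_least) auto

lemma bdd_above_absv_Cbd:
  assumes "f \<in> Cbd X absv" "U \<subseteq> topspace X"
  shows "bdd_above (insert 0 ((\<lambda>x. absv (f x)) ` U))"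
proof -
  obtain B where "0 < B" "\<forall>x\<in>topspace X. absv (f x) \<le> B"
    using CbdD(2)[OF assms(1)] by blast
  then show ?thesis
    using assms(2) unfolding bdd_above_def by (intro exI[of _ B]) auto
qed

lemma sup_on_upper:
  "f \<in> Cbd X absv \<Longrightarrow> U \<subseteq> topspace X \<Longrightarrow> x \<in> U \<Longrightarrow> absv (f x) \<le> sup_on U f"
  unfolding sup_on_def by (rule cSup_upper[OF _ bdd_above_absv_Cbd]) auto

lemma sup_on_nonneg: "f \<in> Cbd X absv \<Longrightarrow> U \<subseteq> topspace X \<Longrightarrow> 0 \<le> sup_on U f"
  unfolding sup_on_def by (rule cSup_upper[OF _ bdd_above_absv_Cbd]) auto

section \<open>Points of the spectrum\<close>

context
  fixes p assumes p: "p \<in> BSC X absv"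
begin

lemma BSC_extensional: "p \<in> extensional (Cbd X absv)"
  using p unfolding BSC_def by blast

lemma BSC_nonneg: "f \<in> Cbd X absv \<Longrightarrow> 0 \<le> p f"
  using p unfolding BSC_def by blast

lemma BSC_mult: "f \<in> Cbd X absv \<Longrightarrow> g \<in> Cbd X absv \<Longrightarrow> p (\<lambda>x. f x * g x) = p f * p g"
  using p unfolding BSC_def by blast

lemma BSC_one: "p (one_k X) = 1"
  using p unfolding BSC_def by blast

lemma BSC_add_le_max:
  "f \<in> Cbd X absv \<Longrightarrow> g \<in> Cbd X absv \<Longrightarrow> p (\<lambda>x. f x + g x) \<le> max (p f) (p g)"
  using p unfolding BSC_def by blast

lemma BSC_scale: "f \<in> Cbd X absv \<Longrightarrow> p (\<lambda>x. a * f x) = absv a * p f"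
  using p unfolding BSC_def by blast

lemma BSC_le_supnorm: "f \<in> Cbd X absv \<Longrightarrow> p f \<le> supnorm X absv f"
  using p unfolding BSC_def by blast

lemma BSC_zero: "p (\<lambda>x. 0) = 0"
  using BSC_scale[OF one_k_in_Cbd, of 0] by simp

lemma BSC_char_k_cases:
  assumes U: "U \<in> CO X"
  shows "p (char_k U) = 0 \<or> p (char_k U) = 1"
proof -
  have "(\<lambda>x. (char_k U x :: 'k) * char_k U x) = char_k U"
    by (simp add: char_k_def fun_eq_iff)
  then have "p (char_k U) = p (char_k U) * p (char_k U)"
    using BSC_mult[OF char_k_in_Cbd[OF U] char_k_in_Cbd[OF U]] by simp
  then show ?thesis
    by auto
qed

lemma BSC_char_k_Diff_cases:
  assumes U: "U \<in> CO X"
  shows "p (char_k U) = 1 \<or> p (char_k (topspace X - U)) = 1"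
proof -
  have "p (\<lambda>x. char_k U x + char_k (topspace X - U) x) \<le> max (p (char_k U)) (p (char_k (topspace X - U)))"
    using BSC_add_le_max[OF char_k_in_Cbd[OF U] char_k_in_Cbd[OF CO_Diff[OF U]]] .
  then have "1 \<le> max (p (char_k U)) (p (char_k (topspace X - U)))"
    unfolding char_k_add_char_k_Diff[OF CO_subset_topspace[OF U]] BSC_one .
  then show ?thesis
    using BSC_char_k_cases[OF U] BSC_char_k_cases[OF CO_Diff[OF U]] by auto
qed

lemma BSC_char_k_Diff_eq_0:
  assumes U: "U \<in> CO X" and pU: "p (char_k U) = 1"
  shows "p (char_k (topspace X - U)) = 0"
proof -
  have "(\<lambda>x. (char_k U x :: 'k) * char_k (topspace X - U) x) = (\<lambda>x. 0)"
    by (auto simp: char_k_def fun_eq_iff)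
  then show ?thesis
    using BSC_mult[OF char_k_in_Cbd[OF U] char_k_in_Cbd[OF CO_Diff[OF U]]] BSC_zero pU by simp
qed

lemma BSC_le_sup_on:
  assumes U: "U \<in> CO X" and pU: "p (char_k U) = 1" and f: "f \<in> Cbd X absv"
  shows "p f \<le> sup_on U f"
proof -
  have fU: "(\<lambda>x. f x * char_k U x) \<in> Cbd X absv"
    using Cbd_mult[OF f char_k_in_Cbd[OF U]] .
  have "p f = p (\<lambda>x. f x * char_k U x)"
    using BSC_mult[OF f char_k_in_Cbd[OF U]] pU by simp
  also have "\<dots> \<le> sup_on (topspace X) (\<lambda>x. f x * char_k U x)"
    using BSC_le_supnorm[OF fU] unfolding supnorm_eq_sup_on .
  also have "\<dots> \<le> sup_on U f"
    using sup_on_nonneg[OF f CO_subset_topspace[OF U]] sup_on_upper[OF f CO_subset_topspace[OF U]]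
    by (intro sup_on_le) (auto simp: char_k_def)
  finally show ?thesis .
qed

lemma BSC_ge_if_superlevel:
  assumes r: "0 < r" and f: "f \<in> Cbd X absv" and pU: "p (char_k (superlevel f r)) = 1"
  shows "r \<le> p f"
proof -
  have g: "partial_inverse f r \<in> Cbd X absv"
    using partial_inverse_in_Cbd[OF f r] .
  have "p (partial_inverse f r) \<le> sup_on (topspace X) (partial_inverse f r)"
    using BSC_le_supnorm[OF g] unfolding supnorm_eq_sup_on .
  also have "\<dots> \<le> inverse r"
    using r absv_partial_inverse_le[OF r] by (intro sup_on_le) auto
  finally have "p (partial_inverse f r) \<le> inverse r" .
  moreover have "1 = p f * p (partial_inverse f r)"
    using pU BSC_mult[OF f g] mult_partial_inverse[OF r] by simp
  ultimately have "1 \<le> p f * inverse r"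
    by (metis BSC_nonneg[OF f] mult_left_mono)
  then show ?thesis
    using r by (simp add: field_simps)
qed

lemma BSC_superlevel:
  assumes f: "f \<in> Cbd X absv" and r: "0 < r" "r < p f"
  shows "p (char_k (superlevel f r)) = 1"
proof (rule ccontr)
  let ?V = "topspace X - superlevel f r"
  assume "p (char_k (superlevel f r)) \<noteq> 1"
  then have "p (char_k ?V) = 1"
    using BSC_char_k_Diff_cases[OF superlevel_in_CO[OF f r(1)]] by auto
  then have "p f \<le> sup_on ?V f"
    using BSC_le_sup_on[OF CO_Diff[OF superlevel_in_CO[OF f r(1)]] _ f] by blast
  also have "\<dots> \<le> r"
    using r(1) by (intro sup_on_le) (auto simp: topspace_Diff_superlevel)
  finally show False
    using r by simp
qed

lemma BSC_sublevel:
  assumes f: "f \<in> Cbd X absv" and s: "p f < s"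
  shows "p (char_k (topspace X - superlevel f s)) = 1"
proof (rule ccontr)
  have s0: "0 < s"
    using s BSC_nonneg[OF f] by simp
  assume "p (char_k (topspace X - superlevel f s)) \<noteq> 1"
  then have "p (char_k (superlevel f s)) = 1"
    using BSC_char_k_Diff_cases[OF superlevel_in_CO[OF f s0]] by auto
  then show False
    using BSC_ge_if_superlevel[OF s0 f] s by simp
qed

end

section \<open>The support is a maximal ideal\<close>

lemma Cbd_ring_simps:
  "carrier (Cbd_ring X absv) = Cbd X absv"
  "f \<otimes>\<^bsub>Cbd_ring X absv\<^esub> g = (\<lambda>x. f x * g x)"
  "\<one>\<^bsub>Cbd_ring X absv\<^esub> = one_k X"
  "\<zero>\<^bsub>Cbd_ring X absv\<^esub> = (\<lambda>x. 0)"
  "f \<oplus>\<^bsub>Cbd_ring X absv\<^esub> g = (\<lambda>x. f x + g x)"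
  by (simp_all add: Cbd_ring_def)

lemma ring_Cbd_ring: "ring (Cbd_ring X absv)"
proof (rule ringI)
  show "abelian_group (Cbd_ring X absv)"
  proof (rule abelian_groupI, unfold Cbd_ring_simps)
    show "\<And>x. x \<in> Cbd X absv \<Longrightarrow> \<exists>y\<in>Cbd X absv. (\<lambda>a. y a + x a) = (\<lambda>x. 0)"
      using uminus_in_Cbd by (intro bexI[of _ "\<lambda>a. - x a" for x]) auto
  qed (simp_all add: Cbd_add zero_in_Cbd algebra_simps)
  show "monoid (Cbd_ring X absv)"
  proof (rule monoidI, unfold Cbd_ring_simps)
    show "\<And>x. x \<in> Cbd X absv \<Longrightarrow> (\<lambda>a. x a * one_k X a) = x"
      using one_k_mult by (simp add: mult.commute)
  qed (simp_all add: Cbd_mult one_k_in_Cbd one_k_mult mult.assoc)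
qed (simp_all add: Cbd_ring_simps algebra_simps)

context
  fixes p assumes p: "p \<in> BSC X absv"
begin

lemma ideal_supp: "ideal (supp X absv p) (Cbd_ring X absv)"
proof -
  interpret R: ring "Cbd_ring X absv"
    by (rule ring_Cbd_ring)
  have mult_closed: "(\<lambda>x. f x * g x) \<in> supp X absv p" "(\<lambda>x. g x * f x) \<in> supp X absv p"
    if "f \<in> supp X absv p" "g \<in> Cbd X absv" for f g
    using that Cbd_mult BSC_mult[OF p] unfolding supp_def by simp_all
  show ?thesis
  proof (rule idealI[OF ring_Cbd_ring])
    show "subgroup (supp X absv p) (add_monoid (Cbd_ring X absv))"
    proof (rule R.add.subgroupI)
      show "supp X absv p \<subseteq> carrier (Cbd_ring X absv)" "supp X absv p \<noteq> {}"
        using zero_in_Cbd BSC_zero[OF p] unfolding supp_def Cbd_ring_simps by auto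
      fix f g assume f: "f \<in> supp X absv p" and g: "g \<in> supp X absv p"
      then have "p (\<lambda>x. f x + g x) \<le> 0" "0 \<le> p (\<lambda>x. f x + g x)"
        using BSC_add_le_max[OF p] BSC_nonneg[OF p] Cbd_add unfolding supp_def by fastforce+
      then show "f \<oplus>\<^bsub>Cbd_ring X absv\<^esub> g \<in> supp X absv p"
        using f g Cbd_add unfolding supp_def Cbd_ring_simps by auto
      have "f \<in> carrier (Cbd_ring X absv)"
        using f unfolding supp_def Cbd_ring_simps by simp
      then have "\<ominus>\<^bsub>Cbd_ring X absv\<^esub> f = (\<lambda>x. - f x)"
        using uminus_in_Cbd by (intro R.minus_equality) (auto simp: Cbd_ring_simps)
      moreover have "p (\<lambda>x. - f x) = 0"
        using f BSC_scale[OF p, of f "- 1"] unfolding supp_def by simp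
      ultimately show "\<ominus>\<^bsub>Cbd_ring X absv\<^esub> f \<in> supp X absv p"
        using f uminus_in_Cbd unfolding supp_def by simp
    qed
  qed (auto simp: Cbd_ring_simps intro: mult_closed)
qed

text \<open>
  If \<open>p f > 0\<close> and \<open>0 < r < p f\<close>, then \<open>f\<close> times its partial inverse is \<open>1\<^sub>U\<close> for the
  superlevel set \<open>U\<close>, while \<open>1\<^bsub>X - U\<^esub>\<close> lies in the support; so every ideal properly
  containing the support contains \<open>1\<^sub>U + 1\<^bsub>X - U\<^esub> = 1\<close>.
\<close>

lemma maximalideal_supp: "maximalideal (supp X absv p) (Cbd_ring X absv)"
proof (rule maximalidealI[OF ideal_supp])
  have "one_k X \<notin> supp X absv p"
    using BSC_one[OF p] unfolding supp_def by simp
  then show "carrier (Cbd_ring X absv) \<noteq> supp X absv p"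
    using one_k_in_Cbd unfolding Cbd_ring_simps by blast
next
  fix J assume J: "ideal J (Cbd_ring X absv)" "supp X absv p \<subseteq> J" "J \<subseteq> carrier (Cbd_ring X absv)"
  interpret J: ideal J "Cbd_ring X absv"
    by (rule J(1))
  show "J = supp X absv p \<or> J = carrier (Cbd_ring X absv)"
  proof (cases "J = supp X absv p")
    case False
    then obtain f where fJ: "f \<in> J" and f_notin: "f \<notin> supp X absv p"
      using J(2) by blast
    have f: "f \<in> Cbd X absv"
      using fJ J(3) unfolding Cbd_ring_simps by blast
    define r where "r = p f / 2"
    have r: "0 < r" "r < p f"
      using f_notin f BSC_nonneg[OF p f] unfolding supp_def r_def by auto
    let ?U = "superlevel f r"
    have U: "?U \<in> CO X"
      using superlevel_in_CO[OF f r(1)] .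
    have "p (char_k (topspace X - ?U)) = 0"
      using BSC_char_k_Diff_eq_0[OF p U BSC_superlevel[OF p f r]] .
    then have compl_in_J: "char_k (topspace X - ?U) \<in> J"
      using J(2) char_k_in_Cbd[OF CO_Diff[OF U]] unfolding supp_def by blast
    have "f \<otimes>\<^bsub>Cbd_ring X absv\<^esub> partial_inverse f r \<in> J"
      using J.I_r_closed[OF fJ] partial_inverse_in_Cbd[OF f r(1)] by (simp add: Cbd_ring_simps)
    then have "char_k ?U \<in> J"
      unfolding Cbd_ring_simps mult_partial_inverse[OF r(1)] .
    then have "char_k ?U \<oplus>\<^bsub>Cbd_ring X absv\<^esub> char_k (topspace X - ?U) \<in> J"
      using J.a_closed compl_in_J by blast
    then have "\<one>\<^bsub>Cbd_ring X absv\<^esub> \<in> J"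
      unfolding Cbd_ring_simps char_k_add_char_k_Diff[OF CO_subset_topspace[OF U]] .
    then show ?thesis
      by (simp add: J.one_imp_carrier)
  qed simp
qed

end

section \<open>The seminorm of an ultrafilter\<close>

definition UF_seminorm :: "'a set set \<Rightarrow> ('a \<Rightarrow> 'k) \<Rightarrow> real" where
  "UF_seminorm F f = (if f \<in> Cbd X absv then Inf ((\<lambda>U. sup_on U f) ` F) else undefined)"

context
  fixes F assumes F: "F \<in> UF X"
begin

lemma UF_seminorm_le_sup_on:
  assumes f: "f \<in> Cbd X absv" and U: "U \<in> F"
  shows "UF_seminorm F f \<le> sup_on U f"
proof -
  have "bdd_below ((\<lambda>U. sup_on U f) ` F)"
    using sup_on_nonneg[OF f] UF_subset_topspace[OF F] unfolding bdd_below_def by blast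
  then show ?thesis
    unfolding UF_seminorm_def using f U by (simp add: cInf_lower)
qed

lemma UF_seminorm_greatest:
  "f \<in> Cbd X absv \<Longrightarrow> (\<And>U. U \<in> F \<Longrightarrow> c \<le> sup_on U f) \<Longrightarrow> c \<le> UF_seminorm F f"
  unfolding UF_seminorm_def using topspace_in_UF[OF F] by (auto intro!: cInf_greatest)

lemma UF_seminorm_nonneg: "f \<in> Cbd X absv \<Longrightarrow> 0 \<le> UF_seminorm F f"
  using UF_seminorm_greatest sup_on_nonneg UF_subset_topspace[OF F] by blast

lemma UF_seminorm_le_bound:
  assumes "f \<in> Cbd X absv" "A \<in> F" "0 \<le> s" "\<And>x. x \<in> A \<Longrightarrow> absv (f x) \<le> s"
  shows "UF_seminorm F f \<le> s"
proof -
  have "sup_on A f \<le> s"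
    using assms(3,4) by (rule sup_on_le)
  then show ?thesis
    using UF_seminorm_le_sup_on[OF assms(1,2)] by linarith
qed

lemma UF_seminorm_ge_bound:
  assumes f: "f \<in> Cbd X absv" and A: "A \<in> F" and bound: "\<And>x. x \<in> A \<Longrightarrow> r \<le> absv (f x)"
  shows "r \<le> UF_seminorm F f"
proof (rule UF_seminorm_greatest[OF f])
  fix V assume V: "V \<in> F"
  then obtain x where "x \<in> A" "x \<in> V"
    using UF_nonempty[OF F UF_Int[OF F A V]] by blast
  then show "r \<le> sup_on V f"
    using bound sup_on_upper[OF f UF_subset_topspace[OF F V]] order_trans by blast
qed

lemma UF_seminorm_superlevel:
  assumes f: "f \<in> Cbd X absv" and r: "0 < r" "r < UF_seminorm F f"
  shows "superlevel f r \<in> F"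
proof (rule ccontr)
  assume "superlevel f r \<notin> F"
  then have "topspace X - superlevel f r \<in> F"
    using UF_Diff_cases[OF F superlevel_in_CO[OF f r(1)]] by blast
  then have "UF_seminorm F f \<le> r"
    by (rule UF_seminorm_le_bound[OF f]) (use r(1) in \<open>auto simp: topspace_Diff_superlevel\<close>)
  then show False
    using r by simp
qed

lemma UF_seminorm_sublevel:
  assumes f: "f \<in> Cbd X absv" and s: "UF_seminorm F f < s"
  shows "topspace X - superlevel f s \<in> F"
proof (rule ccontr)
  have "0 < s"
    using s UF_seminorm_nonneg[OF f] by simp
  moreover assume "topspace X - superlevel f s \<notin> F"
  ultimately have "superlevel f s \<in> F"
    using UF_Diff_cases[OF F superlevel_in_CO[OF f]] by blast
  then have "s \<le> UF_seminorm F f"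
    by (rule UF_seminorm_ge_bound[OF f]) (simp add: superlevel_def)
  then show False
    using s by simp
qed

lemma UF_seminorm_add_le_max:
  assumes f: "f \<in> Cbd X absv" and g: "g \<in> Cbd X absv"
  shows "UF_seminorm F (\<lambda>x. f x + g x) \<le> max (UF_seminorm F f) (UF_seminorm F g)"
proof (rule dense_ge)
  fix s assume s: "max (UF_seminorm F f) (UF_seminorm F g) < s"
  let ?A = "(topspace X - superlevel f s) \<inter> (topspace X - superlevel g s)"
  have "?A \<in> F"
    using s UF_Int[OF F UF_seminorm_sublevel[OF f] UF_seminorm_sublevel[OF g]] by simp
  moreover have "absv (f x + g x) \<le> s" if "x \<in> ?A" for x
    using that absv_add_le_max[of "f x" "g x"] unfolding topspace_Diff_superlevel by auto
  ultimately show "UF_seminorm F (\<lambda>x. f x + g x) \<le> s"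
    using s UF_seminorm_nonneg[OF f] by (intro UF_seminorm_le_bound[OF Cbd_add[OF f g]]) auto
qed

lemma UF_seminorm_mult:
  assumes f: "f \<in> Cbd X absv" and g: "g \<in> Cbd X absv"
  shows "UF_seminorm F (\<lambda>x. f x * g x) = UF_seminorm F f * UF_seminorm F g"
proof (rule antisym)
  show "UF_seminorm F (\<lambda>x. f x * g x) \<le> UF_seminorm F f * UF_seminorm F g"
  proof (rule le_mult_if_le_mult_above)
    fix s t assume s: "UF_seminorm F f < s" and t: "UF_seminorm F g < t"
    let ?A = "(topspace X - superlevel f s) \<inter> (topspace X - superlevel g t)"
    have "?A \<in> F"
      using UF_Int[OF F UF_seminorm_sublevel[OF f s] UF_seminorm_sublevel[OF g t]] .
    moreover have "absv (f x * g x) \<le> s * t" if "x \<in> ?A" for x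
    proof -
      have "absv (f x) \<le> s" "absv (g x) \<le> t"
        using that unfolding topspace_Diff_superlevel by auto
      then show ?thesis
        by (simp add: mult_mono')
    qed
    moreover have "0 \<le> s * t"
      using s t UF_seminorm_nonneg[OF f] UF_seminorm_nonneg[OF g] by simp
    ultimately show "UF_seminorm F (\<lambda>x. f x * g x) \<le> s * t"
      by (intro UF_seminorm_le_bound[OF Cbd_mult[OF f g]])
  qed
  show "UF_seminorm F f * UF_seminorm F g \<le> UF_seminorm F (\<lambda>x. f x * g x)"
  proof (rule mult_le_if_mult_below_le)
    fix s t assume s: "0 < s" "s < UF_seminorm F f" and t: "0 < t" "t < UF_seminorm F g"
    let ?A = "superlevel f s \<inter> superlevel g t"
    have "?A \<in> F"
      using UF_Int[OF F UF_seminorm_superlevel[OF f s] UF_seminorm_superlevel[OF g t]] .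
    moreover have "s * t \<le> absv (f x * g x)" if "x \<in> ?A" for x
      using that s t unfolding superlevel_def by (auto intro: mult_mono)
    ultimately show "s * t \<le> UF_seminorm F (\<lambda>x. f x * g x)"
      by (rule UF_seminorm_ge_bound[OF Cbd_mult[OF f g]])
  qed (use f g Cbd_mult UF_seminorm_nonneg in auto)
qed

lemma UF_seminorm_const: "UF_seminorm F (\<lambda>x. a * one_k X x) = absv a"
proof (rule antisym)
  show "UF_seminorm F (\<lambda>x. a * one_k X x) \<le> absv a"
    using topspace_in_UF[OF F] by (rule UF_seminorm_le_bound[OF const_in_Cbd]) (auto simp: one_k_def)
  show "absv a \<le> UF_seminorm F (\<lambda>x. a * one_k X x)"
    using topspace_in_UF[OF F] by (rule UF_seminorm_ge_bound[OF const_in_Cbd]) (simp add: one_k_def)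
qed

lemma UF_seminorm_in_BSC: "UF_seminorm F \<in> BSC X absv"
  unfolding BSC_def mem_Collect_eq
proof (intro conjI ballI allI)
  show "UF_seminorm F \<in> extensional (Cbd X absv)"
    unfolding extensional_def UF_seminorm_def by simp
  show "UF_seminorm F (one_k X) = 1"
    using UF_seminorm_const[of 1] by simp
  show "\<And>f. f \<in> Cbd X absv \<Longrightarrow> UF_seminorm F f \<le> supnorm X absv f"
    unfolding supnorm_eq_sup_on using topspace_in_UF[OF F] UF_seminorm_le_sup_on by blast
  fix a and f assume f: "f \<in> Cbd X absv"
  show "UF_seminorm F (\<lambda>x. a * f x) = absv a * UF_seminorm F f"
    using UF_seminorm_mult[OF const_in_Cbd f] scale_eq_const_mult[OF f] UF_seminorm_const by simp
qed (simp_all add: UF_seminorm_nonneg UF_seminorm_mult UF_seminorm_add_le_max)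

lemma Fsupp_UF_seminorm: "Fsupp X absv (UF_seminorm F) = F"
proof -
  have "U \<in> Fsupp X absv (UF_seminorm F) \<longleftrightarrow> U \<in> F" if U: "U \<in> CO X" for U
  proof -
    have cU: "char_k U \<in> Cbd X absv"
      using char_k_in_Cbd[OF U] .
    have "U \<in> F \<Longrightarrow> 1 \<le> UF_seminorm F (char_k U)"
      by (rule UF_seminorm_ge_bound[OF cU]) (simp_all add: char_k_def)
    moreover have "U \<notin> F \<Longrightarrow> UF_seminorm F (char_k U) \<le> 0"
      using UF_Diff_cases[OF F U] by (intro UF_seminorm_le_bound[OF cU]) (auto simp: char_k_def)
    ultimately show ?thesis
      using U cU UF_seminorm_nonneg[OF cU] unfolding Fsupp_def supp_def by force
  qed
  then show ?thesis
    using UF_CO[OF F] unfolding Fsupp_def by blast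
qed

end

section \<open>The ultrafilter of a point of the spectrum\<close>

context
  fixes p assumes p: "p \<in> BSC X absv"
begin

lemma Fsupp_iff: "U \<in> Fsupp X absv p \<longleftrightarrow> U \<in> CO X \<and> p (char_k U) = 1"
  using BSC_char_k_cases[OF p] char_k_in_Cbd unfolding Fsupp_def supp_def by auto

lemma Fsupp_in_UF: "Fsupp X absv p \<in> UF X"
proof (rule UFI)
  show "Fsupp X absv p \<subseteq> CO X"
    using Fsupp_iff by blast
  have "(char_k {} :: 'a \<Rightarrow> 'k) = (\<lambda>x. 0)"
    by (simp add: char_k_def fun_eq_iff)
  then show "{} \<notin> Fsupp X absv p"
    using Fsupp_iff BSC_zero[OF p] by simp
next
  fix U V assume "U \<in> Fsupp X absv p" "V \<in> Fsupp X absv p"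
  then have U: "U \<in> CO X" "p (char_k U) = 1" and V: "V \<in> CO X" "p (char_k V) = 1"
    using Fsupp_iff by auto
  have "(char_k (U \<inter> V) :: 'a \<Rightarrow> 'k) = (\<lambda>x. char_k U x * char_k V x)"
    by (simp add: char_k_def fun_eq_iff)
  then have "p (char_k (U \<inter> V)) = 1"
    using BSC_mult[OF p char_k_in_Cbd[OF U(1)] char_k_in_Cbd[OF V(1)]] U V by simp
  then show "U \<inter> V \<in> Fsupp X absv p"
    using Fsupp_iff CO_Int[OF U(1) V(1)] by blast
next
  fix U V assume U: "U \<in> CO X" and "V \<in> Fsupp X absv p"
  then have V: "V \<in> CO X" "p (char_k V) = 1"
    using Fsupp_iff by auto
  have UV: "U \<union> V \<in> CO X"
    using CO_Un[OF U V(1)] .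
  have "(char_k V :: 'a \<Rightarrow> 'k) = (\<lambda>x. char_k V x * char_k (U \<union> V) x)"
    by (simp add: char_k_def fun_eq_iff)
  then have "p (char_k (U \<union> V)) = 1"
    using BSC_mult[OF p char_k_in_Cbd[OF V(1)] char_k_in_Cbd[OF UV]] V(2) by simp
  then show "U \<union> V \<in> Fsupp X absv p"
    using UV Fsupp_iff by blast
next
  fix U assume "U \<in> CO X"
  then show "U \<in> Fsupp X absv p \<or> topspace X - U \<in> Fsupp X absv p"
    using BSC_char_k_Diff_cases[OF p] CO_Diff Fsupp_iff by blast
qed

lemma UF_seminorm_Fsupp: "UF_seminorm (Fsupp X absv p) = p"
proof
  fix f
  have F: "Fsupp X absv p \<in> UF X"
    using Fsupp_in_UF .
  show "UF_seminorm (Fsupp X absv p) f = p f"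
  proof (cases "f \<in> Cbd X absv")
    case False
    then show ?thesis
      using BSC_extensional[OF p] unfolding UF_seminorm_def extensional_def by simp
  next
    case f: True
    show ?thesis
    proof (rule antisym)
      show "UF_seminorm (Fsupp X absv p) f \<le> p f"
      proof (rule dense_ge)
        fix s assume s: "p f < s"
        then have "topspace X - superlevel f s \<in> Fsupp X absv p"
          using Fsupp_iff BSC_sublevel[OF p f] CO_Diff[OF superlevel_in_CO[OF f]] BSC_nonneg[OF p f]
          by auto
        then show "UF_seminorm (Fsupp X absv p) f \<le> s"
          by (rule UF_seminorm_le_bound[OF F f])
            (use s BSC_nonneg[OF p f] in \<open>auto simp: topspace_Diff_superlevel\<close>)
      qed
      show "p f \<le> UF_seminorm (Fsupp X absv p) f"
        using BSC_le_sup_on[OF p _ _ f] Fsupp_iff by (intro UF_seminorm_greatest[OF F f]) blast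
    qed
  qed
qed

end

section \<open>Continuity\<close>

lemma topspace_BSC_top: "topspace (BSC_top X absv) = BSC X absv"
proof -
  have "BSC X absv \<subseteq> (\<Pi>\<^sub>E f\<in>Cbd X absv. UNIV)"
    using BSC_extensional unfolding PiE_def by blast
  then show ?thesis
    unfolding BSC_top_def by auto
qed

lemma continuous_map_BSC_eval:
  "f \<in> Cbd X absv \<Longrightarrow> continuous_map (BSC_top X absv) euclideanreal (\<lambda>q. q f)"
  unfolding BSC_top_def
  by (rule continuous_map_from_subtopology) (use continuous_map_product_projection in force)

lemma continuous_map_Fsupp: "continuous_map (BSC_top X absv) (UF_top X) (Fsupp X absv)"
proof (rule continuous_map_into_UF_top)
  show "\<And>q. q \<in> topspace (BSC_top X absv) \<Longrightarrow> Fsupp X absv q \<in> UF X"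
    using Fsupp_in_UF unfolding topspace_BSC_top .
  fix U assume U: "U \<in> CO X"
  have eq: "{q \<in> topspace (BSC_top X absv). U \<in> Fsupp X absv q}
      = {q \<in> topspace (BSC_top X absv). q (char_k U) \<in> {1/2<..}}"
    using Fsupp_iff BSC_char_k_cases U unfolding topspace_BSC_top by force
  show "openin (BSC_top X absv) {q \<in> topspace (BSC_top X absv). U \<in> Fsupp X absv q}"
    unfolding eq by (rule openin_continuous_map_preimage[OF continuous_map_BSC_eval[OF char_k_in_Cbd[OF U]]]) simp
qed

lemma continuous_map_UF_seminorm_eval:
  assumes f: "f \<in> Cbd X absv"
  shows "continuous_map (UF_top X) euclideanreal (\<lambda>F. UF_seminorm F f)"
  unfolding continuous_map_upper_lower_semicontinuous_lt topspace_UF_top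
proof (intro allI conjI openin_UF_topI)
  fix a and F assume "F \<in> {F \<in> UF X. a < UF_seminorm F f}"
  then have F: "F \<in> UF X" and a: "a < UF_seminorm F f"
    by auto
  show "\<exists>U\<in>CO X. U \<in> F \<and> (\<forall>G\<in>UF X. U \<in> G \<longrightarrow> G \<in> {F \<in> UF X. a < UF_seminorm F f})"
  proof (cases "a < 0")
    case True
    then show ?thesis
      using F topspace_in_CO topspace_in_UF UF_seminorm_nonneg[OF _ f] by fastforce
  next
    case False
    define r where "r = (a + UF_seminorm F f) / 2"
    have r: "0 < r" "a < r" "r < UF_seminorm F f"
      using False a unfolding r_def by auto
    have "r \<le> UF_seminorm G f" if "G \<in> UF X" "superlevel f r \<in> G" for G
      using that by (intro UF_seminorm_ge_bound[OF _ f]) (auto simp: superlevel_def)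
    then show ?thesis
      using UF_seminorm_superlevel[OF F f r(1,3)] superlevel_in_CO[OF f r(1)] r(2)
      by (intro bexI[of _ "superlevel f r"]) fastforce+
  qed
next
  fix a and F assume "F \<in> {F \<in> UF X. UF_seminorm F f < a}"
  then have F: "F \<in> UF X" and a: "UF_seminorm F f < a"
    by auto
  define s where "s = (a + UF_seminorm F f) / 2"
  have s: "0 < s" "UF_seminorm F f < s" "s < a"
    using a UF_seminorm_nonneg[OF F f] unfolding s_def by auto
  have "UF_seminorm G f \<le> s" if "G \<in> UF X" "topspace X - superlevel f s \<in> G" for G
    using that s(1) by (intro UF_seminorm_le_bound[OF _ f]) (auto simp: topspace_Diff_superlevel)
  then show "\<exists>U\<in>CO X. U \<in> F \<and> (\<forall>G\<in>UF X. U \<in> G \<longrightarrow> G \<in> {F \<in> UF X. UF_seminorm F f < a})"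
    using UF_seminorm_sublevel[OF F f s(2)] CO_Diff[OF superlevel_in_CO[OF f s(1)]] s(3)
    by (intro bexI[of _ "topspace X - superlevel f s"]) fastforce+
qed auto

lemma continuous_map_UF_seminorm: "continuous_map (UF_top X) (BSC_top X absv) UF_seminorm"
  unfolding BSC_top_def
proof (rule continuous_map_into_subtopology)
  show "UF_seminorm \<in> topspace (UF_top X) \<rightarrow> BSC X absv"
    using UF_seminorm_in_BSC unfolding topspace_UF_top by blast
  show "continuous_map (UF_top X) (product_topology (\<lambda>f. euclideanreal) (Cbd X absv)) UF_seminorm"
    unfolding continuous_map_componentwise
    using continuous_map_UF_seminorm_eval by (auto simp: extensional_def UF_seminorm_def)
qed

lemma homeomorphic_map_Fsupp: "homeomorphic_map (BSC_top X absv) (UF_top X) (Fsupp X absv)"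
  unfolding homeomorphic_map_maps homeomorphic_maps_def
  using continuous_map_Fsupp continuous_map_UF_seminorm UF_seminorm_Fsupp Fsupp_UF_seminorm
  unfolding topspace_BSC_top topspace_UF_top by blast

end

theorem mainTheorem1:
  fixes X :: "'a topology" and absv :: "'k::field \<Rightarrow> real"
  assumes "nonarch_complete_abs absv"
  shows "(\<forall>p\<in>BSC X absv. maximalideal (supp X absv p) (Cbd_ring X absv))
         \<and> homeomorphic_map (BSC_top X absv) (UF_top X) (Fsupp X absv)"
proof -
  interpret nonarch_space absv X
    using assms by unfold_locales
  show ?thesis
    using maximalideal_supp homeomorphic_map_Fsupp by blast
qed

end
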